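(* Let $X$ be a finite set. For each $x\in X$ there is a homomorphism $\rho_x:\mathbb{A}_X\to\mathbb{A}_X$ satisfying \[ \rho_x(a_{u,v})=\sum_{y\in X}a_{yu,xv} \] for all $u,v\in X^n$, $n\ge 0$.
   Context: For $n\geq 0$, $X^n$ is the set of words of length $n$ in $X$, with $X^0=\{\varnothing\}$; juxtaposition denotes concatenation of words. $\mathbb{A}_X$ is the universal $C^*$-algebra generated by elements $\{a_{u,v}: u,v\in X^n,\ n\geq 0\}$ subject to: (i) $a_{\varnothing,\varnothing}=1$; (ii) $a_{u,v}^*=a_{u,v}^2=a_{u,v}$; (iii) for all $n\geq0$, $u,v\in X^n$, $x\in X$: $a_{u,v}=\sum_{y\in X}a_{ux,vy}=\sum_{z\in X}a_{uz,vx}$. "Homomorphism" means $*$-homomorphism of $C^*$-algebras. *)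

theory Defs
  imports Complex_Main
begin

text \<open>Complex unital C*-algebras, encoded on a real unital Banach algebra type 'a,
  with involution st and a distinguished central element j playing the role of i*1.
  Complex scalar multiplication is c . x = Re c x + Im c (j x).\<close>

definition cscale :: "'a::real_normed_algebra_1 \<Rightarrow> complex \<Rightarrow> 'a \<Rightarrow> 'a" where
  "cscale j c x = Re c *\<^sub>R x + Im c *\<^sub>R (j * x)"

definition cstar_algebra :: "('a::{real_normed_algebra_1,banach} \<Rightarrow> 'a) \<Rightarrow> 'a \<Rightarrow> bool" where
  "cstar_algebra st j \<longleftrightarrow>
     j * j = - 1 \<and> (\<forall>x. j * x = x * j) \<and>
     (\<forall>c x. norm (cscale j c x) = cmod c * norm x) \<and>
     (\<forall>x. st (st x) = x) \<and>
     (\<forall>x y. st (x + y) = st x + st y) \<and>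
     (\<forall>r x. st (r *\<^sub>R x) = r *\<^sub>R st x) \<and>
     st j = - j \<and>
     (\<forall>x y. st (x * y) = st y * st x) \<and>
     (\<forall>x. norm (st x * x) = (norm x)\<^sup>2)"

definition star_hom ::
  "('a::{real_normed_algebra_1,banach} \<Rightarrow> 'a) \<Rightarrow> 'a \<Rightarrow>
   ('b::{real_normed_algebra_1,banach} \<Rightarrow> 'b) \<Rightarrow> 'b \<Rightarrow> ('a \<Rightarrow> 'b) \<Rightarrow> bool" where
  "star_hom st j st' j' f \<longleftrightarrow>
     (\<forall>x y. f (x + y) = f x + f y) \<and>
     (\<forall>c x. f (cscale j c x) = cscale j' c (f x)) \<and>
     (\<forall>x y. f (x * y) = f x * f y) \<and>
     (\<forall>x. f (st x) = st' (f x))"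

definition word_pair :: "'x set \<Rightarrow> 'x list \<Rightarrow> 'x list \<Rightarrow> bool" where
  "word_pair X u v \<longleftrightarrow> set u \<subseteq> X \<and> set v \<subseteq> X \<and> length u = length v"

definition AX_rel :: "'x set \<Rightarrow> ('a::{real_normed_algebra_1,banach} \<Rightarrow> 'a) \<Rightarrow>
    ('x list \<Rightarrow> 'x list \<Rightarrow> 'a) \<Rightarrow> bool" where
  "AX_rel X st b \<longleftrightarrow>
     b [] [] = 1 \<and>
     (\<forall>u v. word_pair X u v \<longrightarrow>
        st (b u v) = b u v \<and> b u v * b u v = b u v \<and>
        (\<forall>x\<in>X. b u v = (\<Sum>y\<in>X. b (u @ [x]) (v @ [y])) \<and>
                b u v = (\<Sum>z\<in>X. b (u @ [z]) (v @ [x]))))"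

text \<open>(st, j, a) is a universal C*-algebra for the relations of A_X (universal property
  tested against C*-algebras on the same carrier type).\<close>
definition universal_AX :: "'x set \<Rightarrow> ('a::{real_normed_algebra_1,banach} \<Rightarrow> 'a) \<Rightarrow> 'a \<Rightarrow>
    ('x list \<Rightarrow> 'x list \<Rightarrow> 'a) \<Rightarrow> bool" where
  "universal_AX X st j a \<longleftrightarrow>
     cstar_algebra st j \<and> AX_rel X st a \<and>
     (\<forall>(st' :: 'a \<Rightarrow> 'a) j' b. cstar_algebra st' j' \<and> AX_rel X st' b \<longrightarrow>
        (\<exists>!f. star_hom st j st' j' f \<and> (\<forall>u v. word_pair X u v \<longrightarrow> f (a u v) = b u v)))"

end

theory Submission
  imports Defs
begin

text \<open>The family \<open>b u v = (\<Sum>y\<in>X. a (y # u) (x # v))\<close> again satisfies the defining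
  relations of \<open>\<bbbA>\<^sub>X\<close>, so \<open>\<rho>\<^sub>x\<close> exists by universality. Relation (i) for \<open>b\<close> is a column
  relation for \<open>a [] []\<close>, and the relations (iii) for \<open>b\<close> follow from those for \<open>a\<close> after
  exchanging the order of summation. The real content is that \<open>b u v\<close> is a projection, i.e. that
  the summands are mutually orthogonal. Iterating the column relations shows that, for a fixed
  column word \<open>c\<close>, the projections \<open>a w c\<close> with \<open>length w = length c\<close> sum to \<open>1\<close>, and
  projections summing to \<open>1\<close> in a C*-algebra are mutually orthogonal.

  The latter is shown with norms only. For \<open>p = P v\<close> the elements \<open>p * P w * p\<close>, \<open>w \<noteq> v\<close>,
  sum to \<open>0\<close> and satisfy \<open>norm (1 - p * P w * p) \<le> 1\<close>, which forces each of them to vanish,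
  because a self-adjoint \<open>g\<close> with \<open>norm (1 + g) \<le> 1\<close> and \<open>norm (1 - g) \<le> 1\<close> is zero: the
  C*-identity and the central square root \<open>j\<close> of \<open>-1\<close> give \<open>norm (1 + z g) \<le> 1\<close> on a disc of
  complex \<open>z\<close>, and the identity \<open>2 (1 + (1 + \<i>) w g) = (1 + w g)\<^sup>2 + (1 + \<i> w g)\<^sup>2\<close> doubles the
  area of that disc.\<close>

lemma le_one_if_pow_two_pow_bounded:
  fixes c :: real
  assumes "0 \<le> c" and bounded: "\<And>k. c ^ (2 ^ k) \<le> B"
  shows "c \<le> 1"
proof (rule ccontr)
  assume "\<not> c \<le> 1"
  then obtain n where "B < c ^ n"
    using real_arch_pow[of c B] by auto
  also have "\<dots> \<le> c ^ (2 ^ n)"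
    using \<open>\<not> c \<le> 1\<close> by (intro power_increasing) (simp_all add: less_imp_le)
  finally show False
    using bounded[of n] by simp
qed

lemma norm_add_scaleR_le_if_norm_add_diff_le:
  fixes a u :: "'a::real_normed_vector"
  assumes "norm (a + u) \<le> r" "norm (a - u) \<le> r" "\<bar>t\<bar> \<le> 1"
  shows "norm (a + t *\<^sub>R u) \<le> r"
proof -
  have weights: "(1 + t) / 2 + (1 - t) / 2 = 1" "(1 + t) / 2 - (1 - t) / 2 = t"
    by (simp_all add: field_simps)
  have "((1 + t) / 2) *\<^sub>R (a + u) + ((1 - t) / 2) *\<^sub>R (a - u)
      = ((1 + t) / 2 + (1 - t) / 2) *\<^sub>R a + ((1 + t) / 2 - (1 - t) / 2) *\<^sub>R u"
    by (simp add: algebra_simps)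
  then have "a + t *\<^sub>R u = ((1 + t) / 2) *\<^sub>R (a + u) + ((1 - t) / 2) *\<^sub>R (a - u)"
    by (simp add: weights)
  then have "norm (a + t *\<^sub>R u)
      \<le> \<bar>(1 + t) / 2\<bar> * norm (a + u) + \<bar>(1 - t) / 2\<bar> * norm (a - u)"
    by (metis norm_scaleR norm_triangle_ineq)
  also have "\<dots> \<le> \<bar>(1 + t) / 2\<bar> * r + \<bar>(1 - t) / 2\<bar> * r"
    by (intro add_mono mult_left_mono assms) auto
  also have "\<dots> = ((1 + t) / 2 + (1 - t) / 2) * r"
    using assms(3) by (simp add: distrib_right)
  also have "\<dots> = r"
    by (simp only: weights mult_1)
  finally show ?thesis .
qed

definition words :: "'x set \<Rightarrow> nat \<Rightarrow> 'x list set" where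
  "words X m = {w. set w \<subseteq> X \<and> length w = m}"

lemma finite_words: "finite X \<Longrightarrow> finite (words X m)"
  unfolding words_def by (rule finite_lists_length_eq)

lemma words_0: "words X 0 = {[]}"
  by (auto simp: words_def)

lemma words_Suc: "words X (Suc m) = (\<lambda>(w, c). w @ [c]) ` (words X m \<times> X)"
proof
  show "words X (Suc m) \<subseteq> (\<lambda>(w, c). w @ [c]) ` (words X m \<times> X)"
  proof
    fix w assume w: "w \<in> words X (Suc m)"
    then have "w \<noteq> []"
      by (auto simp: words_def)
    with w have "w = butlast w @ [last w]" "(butlast w, last w) \<in> words X m \<times> X"
      by (auto simp: words_def dest: in_set_butlastD)
    then show "w \<in> (\<lambda>(w, c). w @ [c]) ` (words X m \<times> X)"
      by (metis (no_types, lifting) case_prod_conv image_eqI)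
  qed
qed (auto simp: words_def)

lemma sum_words_Suc:
  assumes "finite X"
  shows "(\<Sum>w\<in>words X (Suc m). f w) = (\<Sum>w\<in>words X m. \<Sum>c\<in>X. f (w @ [c]))"
proof -
  have "inj_on (\<lambda>(w, c). w @ [c]) (words X m \<times> X)"
    by (auto simp: inj_on_def)
  then have "(\<Sum>w\<in>words X (Suc m). f w) = (\<Sum>(w, c)\<in>words X m \<times> X. f (w @ [c]))"
    unfolding words_Suc by (simp add: sum.reindex case_prod_beta')
  also have "\<dots> = (\<Sum>w\<in>words X m. \<Sum>c\<in>X. f (w @ [c]))"
    by (rule sum.cartesian_product[symmetric])
  finally show ?thesis .
qed

lemma AX_rel_Nil: "AX_rel X st a \<Longrightarrow> a [] [] = 1"
  by (simp add: AX_rel_def)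

lemma
  assumes "AX_rel X st a" and "word_pair X u v"
  shows AX_rel_star: "st (a u v) = a u v"
    and AX_rel_idem: "a u v * a u v = a u v"
    and AX_rel_row_sum: "x \<in> X \<Longrightarrow> a u v = (\<Sum>y\<in>X. a (u @ [x]) (v @ [y]))"
    and AX_rel_column_sum: "x \<in> X \<Longrightarrow> a u v = (\<Sum>z\<in>X. a (u @ [z]) (v @ [x]))"
  using assms unfolding AX_rel_def by blast+

lemma AX_relI:
  assumes "b [] [] = 1"
    and "\<And>u v. word_pair X u v \<Longrightarrow> st (b u v) = b u v"
    and "\<And>u v. word_pair X u v \<Longrightarrow> b u v * b u v = b u v"
    and "\<And>u v x. word_pair X u v \<Longrightarrow> x \<in> X \<Longrightarrow> b u v = (\<Sum>y\<in>X. b (u @ [x]) (v @ [y]))"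
    and "\<And>u v x. word_pair X u v \<Longrightarrow> x \<in> X \<Longrightarrow> b u v = (\<Sum>z\<in>X. b (u @ [z]) (v @ [x]))"
  shows "AX_rel X st b"
  using assms unfolding AX_rel_def by blast

lemma AX_rel_sum_words:
  assumes rel: "AX_rel X st a" and "finite X" and uv: "word_pair X u v"
  shows "set c \<subseteq> X \<Longrightarrow> a u v = (\<Sum>w\<in>words X (length c). a (u @ w) (v @ c))"
proof (induction c rule: rev_induct)
  case (snoc z c)
  have "a (u @ w) (v @ c) = (\<Sum>y\<in>X. a (u @ w @ [y]) (v @ c @ [z]))"
    if "w \<in> words X (length c)" for w
  proof -
    have "word_pair X (u @ w) (v @ c)"
      using that uv snoc.prems by (auto simp: words_def word_pair_def)
    then show ?thesis
      using AX_rel_column_sum[OF rel, of "u @ w" "v @ c" z] snoc.prems by simp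
  qed
  then have "a u v = (\<Sum>w\<in>words X (length c). \<Sum>y\<in>X. a (u @ w @ [y]) (v @ c @ [z]))"
    using snoc by simp
  also have "\<dots> = (\<Sum>w\<in>words X (length (c @ [z])). a (u @ w) (v @ c @ [z]))"
    using sum_words_Suc[OF \<open>finite X\<close>, of "\<lambda>w. a (u @ w) (v @ c @ [z])"] by simp
  finally show ?case
    by simp
qed (simp add: words_0)

corollary AX_rel_sum_words_column:
  assumes "AX_rel X st a" and "finite X" and "set c \<subseteq> X"
  shows "(\<Sum>w\<in>words X (length c). a w c) = 1"
  using AX_rel_sum_words[OF assms(1,2), of "[]" "[]" c] assms
  by (simp add: word_pair_def AX_rel_Nil)

locale cstar =
  fixes st :: "'a::{real_normed_algebra_1,banach} \<Rightarrow> 'a" and j :: 'a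
  assumes cstar_algebra: "cstar_algebra st j"
begin

lemma j_mult_j: "j * j = - 1"
  and j_commute: "j * x = x * j"
  and star_star [simp]: "st (st x) = x"
  and star_add: "st (x + y) = st x + st y"
  and star_scaleR: "st (r *\<^sub>R x) = r *\<^sub>R st x"
  and star_j: "st j = - j"
  and star_mult: "st (x * y) = st y * st x"
  and norm_star_mult_self: "norm (st x * x) = (norm x)\<^sup>2"
  using cstar_algebra unfolding cstar_algebra_def by blast+

lemma star_zero [simp]: "st 0 = 0"
  using star_scaleR[of 0 0] by simp

lemma star_minus: "st (- x) = - st x"
  using star_scaleR[of "-1" x] by simp

lemma star_diff: "st (x - y) = st x - st y"
  using star_add[of x "- y"] by (simp add: star_minus)

lemma star_one [simp]: "st 1 = 1"
  using star_mult[of "st 1" 1] by simp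

lemma star_sum: "st (sum f A) = (\<Sum>i\<in>A. st (f i))"
  by (induction A rule: infinite_finite_induct) (auto simp: star_add)

lemma star_power: "st (x ^ n) = st x ^ n"
  by (induction n) (auto simp: star_mult power_commutes)

lemma norm_power_two_pow_selfadjoint:
  assumes "st y = y"
  shows "norm (y ^ (2 ^ k)) = norm y ^ (2 ^ k)"
proof (induction k)
  case (Suc k)
  have "y ^ (2 ^ Suc k) = st (y ^ (2 ^ k)) * y ^ (2 ^ k)"
    by (simp add: star_power assms mult_2 flip: power_add)
  then have "norm (y ^ (2 ^ Suc k)) = (norm (y ^ (2 ^ k)))\<^sup>2"
    by (simp add: norm_star_mult_self)
  also have "\<dots> = norm y ^ (2 ^ Suc k)"
    by (simp add: Suc power_mult[symmetric] mult.commute)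
  finally show ?case .
qed simp

definition projection :: "'a \<Rightarrow> bool" where
  "projection p \<longleftrightarrow> st p = p \<and> p * p = p"

lemma projection_one_minus: "projection p \<Longrightarrow> projection (1 - p)"
  by (simp add: projection_def star_diff algebra_simps)

lemma norm_projection_le_one:
  assumes "projection p"
  shows "norm p \<le> 1"
proof -
  have "norm p = (norm p)\<^sup>2"
    using norm_star_mult_self[of p] assms by (simp add: projection_def)
  then show ?thesis
    by (cases "norm p = 0") (simp_all add: power2_eq_square)
qed

lemma norm_projection_add_orthogonal_le_one:
  assumes p: "projection p" and y: "st y = y" "p * y = 0" "y * p = 0" "norm y \<le> 1"
  shows "norm (p + y) \<le> 1"
proof -
  have power: "(p + y) ^ Suc n = p + y ^ Suc n" for n
  proof (induction n)
    case (Suc n)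
    have "(p + y) ^ Suc (Suc n) = p * p + p * y ^ Suc n + y * p + y * y ^ Suc n"
      by (simp only: power_Suc[of "p + y" "Suc n"] Suc) (simp add: algebra_simps)
    moreover have "p * y ^ Suc n = 0"
      by (simp add: y mult.assoc[symmetric])
    ultimately show ?case
      using p y by (simp add: projection_def)
  qed simp
  have "norm (p + y) ^ (2 ^ k) \<le> 2" for k
  proof -
    have "norm (p + y) ^ (2 ^ k) = norm (p + y ^ (2 ^ k))"
      using norm_power_two_pow_selfadjoint[of "p + y" k] power[of "2 ^ k - 1"] p y
      by (simp add: projection_def star_add)
    also have "\<dots> \<le> norm p + norm y ^ (2 ^ k)"
      using norm_triangle_ineq norm_power_ineq add_left_mono order_trans by metis
    also have "\<dots> \<le> 2"
      using norm_projection_le_one[OF p] power_le_one[OF norm_ge_zero y(4), of "2 ^ k"] by simp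
    finally show ?thesis .
  qed
  then show ?thesis
    by (rule le_one_if_pow_two_pow_bounded[OF norm_ge_zero])
qed

lemma norm_one_minus_compression_le_one:
  assumes p: "projection p" and q: "projection q"
  shows "norm (1 - p * q * p) \<le> 1"
proof -
  let ?y = "p * (1 - q) * p"
  have decomp: "1 - p * q * p = (1 - p) + ?y"
    using p by (simp add: projection_def right_diff_distrib left_diff_distrib)
  have "st ?y = ?y"
    using p q by (simp add: projection_def star_mult star_diff mult.assoc)
  moreover have "(1 - p) * ?y = 0" "?y * (1 - p) = 0"
  proof -
    have "(1 - p) * p = 0" "p * (1 - p) = 0"
      using p by (simp_all add: projection_def algebra_simps)
    moreover have "(1 - p) * ?y = ((1 - p) * p) * ((1 - q) * p)" "?y * (1 - p) = p * (1 - q) * (p * (1 - p))"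
      by (simp_all only: mult.assoc)
    ultimately show "(1 - p) * ?y = 0" "?y * (1 - p) = 0"
      by simp_all
  qed
  moreover have "norm ?y \<le> 1"
  proof -
    have "norm ?y \<le> norm p * norm (1 - q) * norm p"
      by (metis norm_mult_ineq mult_right_mono norm_ge_zero order_trans)
    also have "\<dots> \<le> 1"
      using norm_projection_le_one[OF p] norm_projection_le_one[OF projection_one_minus[OF q]]
      by (simp add: mult_le_one)
    finally show ?thesis .
  qed
  ultimately show ?thesis
    unfolding decomp by (rule norm_projection_add_orthogonal_le_one[OF projection_one_minus[OF p]])
qed

definition of_complex :: "complex \<Rightarrow> 'a" where
  "of_complex c = Re c *\<^sub>R 1 + Im c *\<^sub>R j"

lemma of_complex_commute: "of_complex c * x = x * of_complex c"
  by (simp add: of_complex_def algebra_simps j_commute)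

lemma of_complex_0 [simp]: "of_complex 0 = 0"
  by (simp add: of_complex_def)

lemma of_complex_add: "of_complex (c + d) = of_complex c + of_complex d"
  by (simp add: of_complex_def algebra_simps)

lemma of_complex_mult: "of_complex (c * d) = of_complex c * of_complex d"
  by (simp add: of_complex_def algebra_simps j_mult_j)

lemma of_complex_of_real: "of_complex (complex_of_real r) = of_real r"
  by (simp add: of_complex_def of_real_def)

lemma norm_one_plus_of_complex_mult_le_one_double:
  assumes disc: "\<And>w. cmod w \<le> r \<Longrightarrow> norm (1 + of_complex w * g) \<le> 1"
    and z: "cmod z \<le> sqrt 2 * r"
  shows "norm (1 + of_complex z * g) \<le> 1"
proof -
  define w where "w = z / (1 + \<i>)"
  have "cmod (1 + \<i>) = sqrt 2"
    by (simp add: cmod_def)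
  then have w: "cmod w \<le> r" "cmod (\<i> * w) \<le> r"
    using z by (simp_all add: w_def norm_mult norm_divide divide_le_eq mult.commute)
  have z_eq: "z = w + \<i> * w"
    by (simp add: w_def complex_eq_iff field_simps)
  have square: "(1 + of_complex v * g) * (1 + of_complex v * g)
      = 1 + 2 *\<^sub>R (of_complex v * g) + of_complex (v * v) * (g * g)" for v
  proof -
    have "of_complex v * g * (of_complex v * g) = of_complex (v * v) * (g * g)"
      by (metis of_complex_commute of_complex_mult mult.assoc)
    then show ?thesis
      by (simp add: algebra_simps scaleR_2)
  qed
  \<comment> \<open>The linear terms add up to \<open>z g\<close> and, as \<open>w\<^sup>2 + (\<i> w)\<^sup>2 = 0\<close>, the quadratic ones cancel.\<close>
  have "(1 + of_complex w * g) * (1 + of_complex w * g)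
        + (1 + of_complex (\<i> * w) * g) * (1 + of_complex (\<i> * w) * g)
      = 2 *\<^sub>R (1 + of_complex z * g)"
    unfolding square z_eq
    by (simp add: algebra_simps scaleR_2 flip: distrib_right of_complex_add)
  moreover have "norm (y * y) \<le> 1" if "norm y \<le> 1" for y :: 'a
    using norm_mult_ineq[of y y] that mult_le_one[OF that norm_ge_zero that] by linarith
  ultimately have "norm (2 *\<^sub>R (1 + of_complex z * g)) \<le> 2"
    using disc[OF w(1)] disc[OF w(2)] norm_triangle_le by (metis one_add_one add_mono)
  then show ?thesis
    by simp
qed

lemma eq_0_if_norm_one_plus_of_complex_mult_le_one:
  assumes "r > 0" and disc: "\<And>w. cmod w \<le> r \<Longrightarrow> norm (1 + of_complex w * g) \<le> 1"
  shows "g = 0"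
proof (rule ccontr)
  assume "g \<noteq> 0"
  have discs: "cmod w \<le> sqrt 2 ^ k * r \<Longrightarrow> norm (1 + of_complex w * g) \<le> 1" for k w
  proof (induction k arbitrary: w)
    case (Suc k)
    then show ?case
      using norm_one_plus_of_complex_mult_le_one_double[of "sqrt 2 ^ k * r"] by (simp add: mult.assoc)
  qed (simp add: disc)
  obtain k where k: "2 / (r * norm g) < sqrt 2 ^ k"
    using real_arch_pow[of "sqrt 2"] by auto
  define R where "R = sqrt 2 ^ k * r"
  have "cmod (complex_of_real R) \<le> sqrt 2 ^ k * r"
    unfolding norm_of_real R_def using \<open>r > 0\<close> by simp
  then have "norm (1 + of_complex (complex_of_real R) * g) \<le> 1"
    by (rule discs)
  then have "norm (R *\<^sub>R g) \<le> 2"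
    using norm_triangle_ineq4[of "1 + R *\<^sub>R g" 1] by (simp add: of_complex_of_real scaleR_conv_of_real)
  moreover have "R * norm g > 2"
    using k \<open>r > 0\<close> \<open>g \<noteq> 0\<close> by (simp add: R_def divide_less_eq mult.commute mult.left_commute)
  ultimately show False
    using \<open>r > 0\<close> by (simp add: R_def)
qed

lemma norm_one_plus_skew_squared:
  assumes "st h = - h"
  shows "(norm (1 + h))\<^sup>2 = norm (1 - h * h)"
proof -
  have "st (1 + h) * (1 + h) = 1 - h * h"
    using assms by (simp add: star_add algebra_simps)
  then show ?thesis
    using norm_star_mult_self[of "1 + h"] by simp
qed

lemma selfadjoint_eq_0_if_norm_one_pm_le_one:
  assumes g: "st g = g" and plus: "norm (1 + g) \<le> 1" and minus: "norm (1 - g) \<le> 1"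
  shows "g = 0"
proof -
  have "2 *\<^sub>R (1 + g * g) = (1 + g) * (1 + g) + (1 - g) * (1 - g)"
    by (simp add: algebra_simps scaleR_2)
  then have "norm (2 *\<^sub>R (1 + g * g)) \<le> norm (1 + g) * norm (1 + g) + norm (1 - g) * norm (1 - g)"
    by (metis norm_mult_ineq norm_triangle_le add_mono)
  also have "\<dots> \<le> 2"
    using plus minus mult_le_one[OF plus norm_ge_zero plus] mult_le_one[OF minus norm_ge_zero minus]
    by simp
  finally have square: "norm (1 + g * g) \<le> 1"
    by simp
  have skew: "st (j * g) = - (j * g)" "st (- (j * g)) = - (- (j * g))"
    by (simp_all add: star_mult star_minus star_j g j_commute)
  have "j * g * (j * g) = - (g * g)"
    by (metis j_commute j_mult_j mult.assoc mult_minus1)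
  then have "(norm (1 + j * g))\<^sup>2 \<le> 1" "(norm (1 - j * g))\<^sup>2 \<le> 1"
    using norm_one_plus_skew_squared[OF skew(1)] norm_one_plus_skew_squared[OF skew(2)] square
    by simp_all
  then have j_plus: "norm (1 + j * g) \<le> 1" and j_minus: "norm (1 - j * g) \<le> 1"
    by (simp_all add: power_le_one_iff)
  show "g = 0"
  proof (rule eq_0_if_norm_one_plus_of_complex_mult_le_one)
    fix z :: complex
    assume "cmod z \<le> 1 / 2"
    then have "\<bar>2 * Re z\<bar> \<le> 1" "\<bar>2 * Im z\<bar> \<le> 1"
      using abs_Re_le_cmod[of z] abs_Im_le_cmod[of z] by auto
    then have "norm (1 + (2 * Re z) *\<^sub>R g) \<le> 1" "norm (1 + (2 * Im z) *\<^sub>R (j * g)) \<le> 1"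
      using norm_add_scaleR_le_if_norm_add_diff_le plus minus j_plus j_minus by blast+
    moreover have "2 *\<^sub>R (1 + of_complex z * g)
        = (1 + (2 * Re z) *\<^sub>R g) + (1 + (2 * Im z) *\<^sub>R (j * g))"
      by (simp add: of_complex_def algebra_simps scaleR_2)
    ultimately have "norm (2 *\<^sub>R (1 + of_complex z * g)) \<le> 2"
      by (metis norm_triangle_le add_mono one_add_one)
    then show "norm (1 + of_complex z * g) \<le> 1"
      by simp
  qed simp
qed

text \<open>For self-adjoint \<open>e\<close>, \<open>norm (1 - e) \<le> 1\<close> means \<open>0 \<le> e \<le> 2\<close>; this norm
  condition stands in for positivity, so no spectral theory is needed.\<close>

lemma sum_selfadjoint_eq_0_imp_eq_0:
  assumes "finite S" and selfadjoint: "\<And>w. w \<in> S \<Longrightarrow> st (e w) = e w"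
    and norm_le: "\<And>w. w \<in> S \<Longrightarrow> norm (1 - e w) \<le> 1"
    and "sum e S = 0" and "v \<in> S"
  shows "e v = 0"
proof -
  define N where "N = real (card (S - {v}))"
  have "(\<Sum>w\<in>S - {v}. 1 - e w) = of_real N + e v"
    using \<open>finite S\<close> \<open>v \<in> S\<close> \<open>sum e S = 0\<close>
    by (simp add: sum_subtractf N_def sum_diff1)
  moreover have "norm (\<Sum>w\<in>S - {v}. 1 - e w) \<le> N"
    using sum_norm_le[of "S - {v}" "\<lambda>w. 1 - e w" "\<lambda>_. 1"] norm_le by (simp add: N_def)
  ultimately have "norm (of_real N + e v) \<le> N"
    by simp
  define g where "g = (1 / (N + 1)) *\<^sub>R e v"
  have N_pos: "N + 1 > 0"
    by (simp add: N_def)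
  have "(N + 1) *\<^sub>R (1 + g) = (of_real N + e v) + 1" "(N + 1) *\<^sub>R (1 - g) = of_real N + (1 - e v)"
    using N_pos by (simp_all add: g_def algebra_simps of_real_def)
  then have scaled: "(N + 1) * norm (1 + g) = norm ((of_real N + e v) + 1)"
      "(N + 1) * norm (1 - g) = norm (of_real N + (1 - e v))"
    using N_pos by (metis norm_scaleR abs_of_pos)+
  have "(N + 1) * norm (1 + g) \<le> N + 1"
    unfolding scaled(1)
    using norm_triangle_ineq[of "of_real N + e v" 1] \<open>norm (of_real N + e v) \<le> N\<close> by simp
  moreover have "(N + 1) * norm (1 - g) \<le> N + 1"
    unfolding scaled(2)
    using norm_triangle_ineq[of "of_real N" "1 - e v"] norm_le[OF \<open>v \<in> S\<close>] by (simp add: N_def)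
  ultimately have "norm (1 + g) \<le> 1" "norm (1 - g) \<le> 1"
    using N_pos by simp_all
  moreover have "st g = g"
    by (simp add: g_def star_scaleR selfadjoint \<open>v \<in> S\<close>)
  ultimately have "g = 0"
    using selfadjoint_eq_0_if_norm_one_pm_le_one by blast
  then show ?thesis
    using N_pos by (simp add: g_def)
qed

lemma projections_sum_one_orthogonal:
  assumes "finite W" and P: "\<And>w. w \<in> W \<Longrightarrow> projection (P w)" and "sum P W = 1"
    and "v \<in> W" "w \<in> W" "v \<noteq> w"
  shows "P w * P v = 0"
proof -
  define p where "p = P v"
  have p: "projection p"
    using P \<open>v \<in> W\<close> by (simp add: p_def)
  then have p_sum: "(\<Sum>u\<in>W - {v}. P u) = 1 - p"
    using \<open>finite W\<close> \<open>v \<in> W\<close> \<open>sum P W = 1\<close> by (simp add: sum_diff1 p_def)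
  have "(\<Sum>u\<in>W - {v}. p * P u * p) = p * (1 - p) * p"
    unfolding p_sum[symmetric] by (simp add: sum_distrib_left sum_distrib_right)
  also have "\<dots> = 0"
    using p by (simp add: projection_def algebra_simps)
  finally have "p * P w * p = 0"
  proof (rule sum_selfadjoint_eq_0_imp_eq_0[rotated 3])
    fix u assume "u \<in> W - {v}"
    then show "st (p * P u * p) = p * P u * p" "norm (1 - p * P u * p) \<le> 1"
      using p P[of u] norm_one_minus_compression_le_one[OF p]
      by (auto simp: projection_def star_mult mult.assoc)
  qed (use \<open>finite W\<close> \<open>w \<in> W\<close> \<open>v \<noteq> w\<close> in auto)
  moreover have "st (P w * p) * (P w * p) = p * P w * p"
  proof -
    have "st (P w * p) * (P w * p) = p * P w * (P w * p)"
      using p P[OF \<open>w \<in> W\<close>] by (simp add: projection_def star_mult)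
    also have "\<dots> = p * (P w * P w) * p"
      by (simp only: mult.assoc)
    finally show ?thesis
      using P[OF \<open>w \<in> W\<close>] by (simp add: projection_def)
  qed
  ultimately show ?thesis
    using norm_star_mult_self[of "P w * p"] by (simp add: p_def)
qed

lemma projection_sum_orthogonal:
  assumes "finite S" and P: "\<And>s. s \<in> S \<Longrightarrow> projection (P s)"
    and orthogonal: "\<And>s t. s \<in> S \<Longrightarrow> t \<in> S \<Longrightarrow> s \<noteq> t \<Longrightarrow> P s * P t = 0"
  shows "projection (sum P S)"
proof -
  have "(\<Sum>t\<in>S. P s * P t) = P s" if "s \<in> S" for s
  proof -
    have "(\<Sum>t\<in>S. P s * P t) = (\<Sum>t\<in>S. if t = s then P s else 0)"
      using P orthogonal that by (intro sum.cong) (auto simp: projection_def)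
    then show ?thesis
      using \<open>finite S\<close> that by simp
  qed
  then have "sum P S * sum P S = sum P S"
    by (simp add: sum_product)
  moreover have "st (sum P S) = sum P S"
    using P by (simp add: star_sum projection_def)
  ultimately show ?thesis
    by (simp add: projection_def)
qed

lemma AX_rel_projection:
  "AX_rel X st a \<Longrightarrow> word_pair X u v \<Longrightarrow> projection (a u v)"
  by (simp add: projection_def AX_rel_star AX_rel_idem)

lemma AX_rel_column_orthogonal:
  assumes "finite X" and rel: "AX_rel X st a" and "set c \<subseteq> X"
    and "w \<in> words X (length c)" "w' \<in> words X (length c)" "w \<noteq> w'"
  shows "a w c * a w' c = 0"
proof (rule projections_sum_one_orthogonal[where P = "\<lambda>w. a w c"])
  show "projection (a w c)" if "w \<in> words X (length c)" for w
    using that \<open>set c \<subseteq> X\<close> by (intro AX_rel_projection[OF rel]) (simp add: words_def word_pair_def)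
qed (use assms finite_words[OF \<open>finite X\<close>]
      AX_rel_sum_words_column[OF rel \<open>finite X\<close> \<open>set c \<subseteq> X\<close>] in simp_all)

lemma AX_rel_shift:
  assumes "finite X" and rel: "AX_rel X st a" and "x \<in> X"
  shows "AX_rel X st (\<lambda>u v. \<Sum>y\<in>X. a (y # u) (x # v))"
proof (rule AX_relI)
  have shifted: "word_pair X (y # u) (x # v)" if "word_pair X u v" "y \<in> X" for u v y
    using that \<open>x \<in> X\<close> by (simp add: word_pair_def)
  show "(\<Sum>y\<in>X. a [y] [x]) = 1"
    using AX_rel_sum_words_column[OF rel \<open>finite X\<close>, of "[x]"] \<open>x \<in> X\<close> \<open>finite X\<close>
    by (simp add: sum_words_Suc words_0)
  fix u v assume uv: "word_pair X u v"
  show "st (\<Sum>y\<in>X. a (y # u) (x # v)) = (\<Sum>y\<in>X. a (y # u) (x # v))"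
    using AX_rel_star[OF rel shifted[OF uv]] by (simp add: star_sum)
  have "projection (\<Sum>y\<in>X. a (y # u) (x # v))"
  proof (rule projection_sum_orthogonal[OF \<open>finite X\<close>])
    show "projection (a (y # u) (x # v))" if "y \<in> X" for y
      using AX_rel_projection[OF rel shifted[OF uv that]] .
    show "a (y # u) (x # v) * a (y' # u) (x # v) = 0" if "y \<in> X" "y' \<in> X" "y \<noteq> y'" for y y'
      using AX_rel_column_orthogonal[OF \<open>finite X\<close> rel, of "x # v" "y # u" "y' # u"] that uv \<open>x \<in> X\<close>
      by (simp add: words_def word_pair_def)
  qed
  then show "(\<Sum>y\<in>X. a (y # u) (x # v)) * (\<Sum>y\<in>X. a (y # u) (x # v)) = (\<Sum>y\<in>X. a (y # u) (x # v))"
    by (simp add: projection_def)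
  fix x' assume "x' \<in> X"
  show "(\<Sum>y\<in>X. a (y # u) (x # v)) = (\<Sum>y'\<in>X. \<Sum>y\<in>X. a (y # u @ [x']) (x # v @ [y']))"
    by (subst sum.swap) (simp add: AX_rel_row_sum[OF rel shifted[OF uv] \<open>x' \<in> X\<close>])
  show "(\<Sum>y\<in>X. a (y # u) (x # v)) = (\<Sum>z\<in>X. \<Sum>y\<in>X. a (y # u @ [z]) (x # v @ [x']))"
    by (subst sum.swap) (simp add: AX_rel_column_sum[OF rel shifted[OF uv] \<open>x' \<in> X\<close>])
qed

end

theorem proposition4p1:
  fixes X :: "'x set" and st :: "'a::{real_normed_algebra_1,banach} \<Rightarrow> 'a" and j :: 'a
    and a :: "'x list \<Rightarrow> 'x list \<Rightarrow> 'a" and x :: 'x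
  assumes "finite X" and "universal_AX X st j a" and "x \<in> X"
  shows "\<exists>\<rho>. star_hom st j st j \<rho> \<and>
           (\<forall>u v. word_pair X u v \<longrightarrow> \<rho> (a u v) = (\<Sum>y\<in>X. a (y # u) (x # v)))"
proof -
  have "cstar_algebra st j" and rel: "AX_rel X st a"
    and universal: "\<And>b. AX_rel X st b \<Longrightarrow>
      \<exists>!f. star_hom st j st j f \<and> (\<forall>u v. word_pair X u v \<longrightarrow> f (a u v) = b u v)"
    using assms(2) by (simp_all add: universal_AX_def)
  interpret cstar st j
    by (rule cstar.intro) fact
  show ?thesis
    using universal[OF AX_rel_shift[OF assms(1) rel assms(3)]] by (rule ex1_implies_ex)
qed

end
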